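(* Assume the setting and notation in the context, and suppose the selection threshold is exchangeable: $\hat\tau=\tau(T_i: i\in\mathcal C\cup\mathcal U)$ for a deterministic measurable function $\tau:\mathbb R^{n+m}\to\mathbb R$ that is invariant under all permutations of its $n+m$ arguments. Let $\hat{\mathcal S}_u=\{i\in\mathcal U: T_i\le\hat\tau\}$, $\hat{\mathcal S}_c=\{i\in\mathcal C: T_i\le\hat\tau\}$, and for $j\in\hat{\mathcal S}_u$ let $\mathrm{PI}^{\mathrm{SCOP}}_j=\big[\hat\mu(X_j)-Q_\alpha(\{R_i\}_{i\in\hat{\mathcal S}_c}),\ \hat\mu(X_j)+Q_\alpha(\{R_i\}_{i\in\hat{\mathcal S}_c})\big]$. Then: (i) for every $j\in\mathcal U$ with $\mathbb P(j\in\hat{\mathcal S}_u)>0$, $\mathbb P\big(Y_j\notin \mathrm{PI}^{\mathrm{SCOP}}_j\mid j\in\hat{\mathcal S}_u\big)\le\alpha$; (ii) $\mathrm{FCR}\le\alpha$ for these intervals; (iii) if moreover the residuals $\{R_i\}_{i\in\mathcal C\cup\mathcal U}$ are almost surely pairwise distinct and $\mathbb P(|\hat{\mathcal S}_u|>0)=1$, then $\mathrm{FCR}\ge\alpha-\mathbb E\big[(|\hat{\mathcal S}_c|+1)^{-1}\big]$.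
   Context: Setting: $\hat\mu:\mathbb R^d\to\mathbb R$ (prediction model) and $g:\mathbb R^d\to\mathbb R$ (selection score) are fixed deterministic measurable functions (obtained from a training set that is treated as fixed). The calibration indices form a set $\mathcal C$ with $|\mathcal C|=n$ and the test indices a disjoint set $\mathcal U$ with $|\mathcal U|=m$. The pairs $(X_i,Y_i)\in\mathbb R^d\times\mathbb R$, $i\in\mathcal C\cup\mathcal U$, are independent and identically distributed; test labels are unobserved by the procedure. Define scores $T_i=g(X_i)$ and residuals $R_i=|Y_i-\hat\mu(X_i)|$. Fix $\alpha\in(0,1)$. For a finite index set $S$, $Q_\alpha(\{R_i\}_{i\in S})$ denotes the $\lceil(1-\alpha)(|S|+1)\rceil$-th smallest value of $\{R_i\}_{i\in S}$, with the convention that it equals $+\infty$ if $\lceil(1-\alpha)(|S|+1)\rceil>|S|$ (in particular if $S=\emptyset$). For a selected test set $\hat{\mathcal S}_u$ with intervals $\mathrm{PI}_j$, $j\in\hat{\mathcal S}_u$, the false coverage-statement rate is $\mathrm{FCR}=\mathbb E\Big[\frac{|\{j\in\hat{\mathcal S}_u: Y_j\notin\mathrm{PI}_j\}|}{\max\{|\hat{\mathcal S}_u|,1\}}\Big]$. *)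

theory Defs
  imports "HOL-Probability.Probability" "HOL-Library.Multiset"
begin

text \<open>Conformal quantile Q_alpha of the values R i, i in S: the
  ceil((1-alpha)(|S|+1))-th smallest value (with multiplicity), or +infinity if
  that rank exceeds |S| (in particular if S is empty).\<close>
definition conf_quantile :: "real \<Rightarrow> 'i set \<Rightarrow> ('i \<Rightarrow> real) \<Rightarrow> ereal" where
  "conf_quantile \<alpha> S R =
     (let k = nat \<lceil>(1 - \<alpha>) * (real (card S) + 1)\<rceil> in
      if k > card S then \<infinity>
      else ereal (sorted_list_of_multiset (image_mset R (mset_set S)) ! (k - 1)))"

text \<open>Selection threshold tau_hat = tau(T_i : i in C u U), with T_i = g(X_i).
  tau is a function of the vector (T_i)_{i in C u U}, represented as an
  extensional function on C u U.\<close>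
definition tau_hat ::
  "(('i \<Rightarrow> real) \<Rightarrow> real) \<Rightarrow> ('x \<Rightarrow> real) \<Rightarrow> 'i set \<Rightarrow> 'i set \<Rightarrow> ('i \<Rightarrow> 'w \<Rightarrow> 'x) \<Rightarrow> 'w \<Rightarrow> real" where
  "tau_hat \<tau> g C U X \<omega> = \<tau> (restrict (\<lambda>i. g (X i \<omega>)) (C \<union> U))"

definition selected ::
  "(('i \<Rightarrow> real) \<Rightarrow> real) \<Rightarrow> ('x \<Rightarrow> real) \<Rightarrow> 'i set \<Rightarrow> 'i set \<Rightarrow> ('i \<Rightarrow> 'w \<Rightarrow> 'x) \<Rightarrow> 'i set \<Rightarrow> 'w \<Rightarrow> 'i set" where
  "selected \<tau> g C U X A \<omega> = {i \<in> A. g (X i \<omega>) \<le> tau_hat \<tau> g C U X \<omega>}"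

definition scop_miss ::
  "real \<Rightarrow> ('x \<Rightarrow> real) \<Rightarrow> (('i \<Rightarrow> real) \<Rightarrow> real) \<Rightarrow> ('x \<Rightarrow> real) \<Rightarrow> 'i set \<Rightarrow> 'i set
    \<Rightarrow> ('i \<Rightarrow> 'w \<Rightarrow> 'x) \<Rightarrow> ('i \<Rightarrow> 'w \<Rightarrow> real) \<Rightarrow> 'i \<Rightarrow> 'w \<Rightarrow> bool" where
  "scop_miss \<alpha> \<mu> \<tau> g C U X Y j \<omega> =
     (let q = conf_quantile \<alpha> (selected \<tau> g C U X C \<omega>) (\<lambda>i. \<bar>Y i \<omega> - \<mu> (X i \<omega>)\<bar>)
      in \<not> (ereal (\<mu> (X j \<omega>)) - q \<le> ereal (Y j \<omega>) \<and> ereal (Y j \<omega>) \<le> ereal (\<mu> (X j \<omega>)) + q))"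

definition scop_FCR ::
  "'w measure \<Rightarrow> real \<Rightarrow> ('x \<Rightarrow> real) \<Rightarrow> (('i \<Rightarrow> real) \<Rightarrow> real) \<Rightarrow> ('x \<Rightarrow> real) \<Rightarrow> 'i set \<Rightarrow> 'i set
    \<Rightarrow> ('i \<Rightarrow> 'w \<Rightarrow> 'x) \<Rightarrow> ('i \<Rightarrow> 'w \<Rightarrow> real) \<Rightarrow> real" where
  "scop_FCR M \<alpha> \<mu> \<tau> g C U X Y =
     (\<integral>\<omega>. real (card {j \<in> selected \<tau> g C U X U \<omega>. scop_miss \<alpha> \<mu> \<tau> g C U X Y j \<omega>})
            / real (max (card (selected \<tau> g C U X U \<omega>)) 1) \<partial>M)"

end

theory Submission
  imports Defs
begin

text \<open>
  The law of the sample \<open>(X i, Y i)\<close>, \<open>i \<in> C \<union> U\<close>, is a product of identical marginals, hence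
  invariant under every permutation of \<open>C \<union> U\<close>, and the symmetric threshold does not see
  the permutation. Fix a test index \<open>j\<close> and average over the transpositions \<open>(i j)\<close>,
  \<open>i \<in> C \<union> {j}\<close>: in the swapped sample, \<open>j\<close> is selected iff \<open>i\<close> is among the selected
  points \<open>S\<close> of \<open>C \<union> {j}\<close>, and it is then miscovered iff \<open>R\<^sub>i\<close> exceeds the conformal
  quantile of the residuals in \<open>S - {i}\<close>. Among \<open>K\<close> numbers at most \<open>\<alpha>K\<close> exceed their
  leave-one-out quantile, and at least \<open>\<alpha>K - 1\<close> if they are distinct; integrating over the
  exchangeable law turns these counts into the three bounds.
\<close>

section \<open>Leave-one-out exceedances of the conformal quantile\<close>

lemma card_rank_ge_le:
  fixes r :: "'a \<Rightarrow> 'b::linorder"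
  assumes S: "finite S"
  shows "card {i\<in>S. k \<le> card {l\<in>S. r l < r i}} \<le> card S - k"
proof (cases "{i\<in>S. k \<le> card {l\<in>S. r l < r i}} = {}")
  case True
  then show ?thesis by (simp only: card.empty)
next
  case False
  define W where "W = {i\<in>S. k \<le> card {l\<in>S. r l < r i}}"
  have WS: "W \<subseteq> S" and finW: "finite W" using S by (auto simp: W_def)
  obtain i where iW: "i \<in> W" and imin: "\<And>l. l \<in> W \<Longrightarrow> r i \<le> r l"
  proof -
    have "Min (r ` W) \<in> r ` W" using finW False by (intro Min_in) (auto simp: W_def)
    then obtain i where "i \<in> W" "r i = Min (r ` W)" by auto
    moreover have "\<And>l. l \<in> W \<Longrightarrow> Min (r ` W) \<le> r l" using finW by (intro Min_le) auto
    ultimately show ?thesis using that by auto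
  qed
  have "k \<le> card {l\<in>S. r l < r i}" using iW by (simp add: W_def)
  also have "\<dots> \<le> card (S - W)" using imin S by (intro card_mono) fastforce+
  also have "\<dots> = card S - card W" using WS finW by (simp add: card_Diff_subset)
  finally have "k \<le> card S - card W" .
  moreover have "card W \<le> card S" using WS S by (simp add: card_mono)
  ultimately show ?thesis unfolding W_def[symmetric] by linarith
qed

lemma card_rank_ge_eq:
  fixes r :: "'a \<Rightarrow> 'b::linorder"
  assumes S: "finite S" and inj: "inj_on r S" and k: "k \<le> card S"
  shows "card {i\<in>S. k \<le> card {l\<in>S. r l < r i}} = card S - k"
proof -
  define rk where "rk i = card {l\<in>S. r l < r i}" for i
  have rk_less: "rk a < rk b" if "a \<in> S" "b \<in> S" "r a < r b" for a b
    unfolding rk_def using that S by (intro psubset_card_mono) auto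
  have inj_rk: "inj_on rk S"
  proof (rule inj_onI)
    fix a b assume ab: "a \<in> S" "b \<in> S" "rk a = rk b"
    then have "\<not> r a < r b" "\<not> r b < r a" using rk_less by (metis less_irrefl)+
    then show "a = b" using inj ab by (meson inj_onD linorder_neqE)
  qed
  have rk_bound: "rk i < card S" if "i \<in> S" for i
    unfolding rk_def using that S by (intro psubset_card_mono) auto
  have rk_img: "rk ` S = {..<card S}"
    by (rule card_subset_eq) (use rk_bound card_image[OF inj_rk] in auto)
  have "rk ` {i\<in>S. k \<le> rk i} = {k..<card S}"
  proof
    show "rk ` {i\<in>S. k \<le> rk i} \<subseteq> {k..<card S}" using rk_bound by auto
    show "{k..<card S} \<subseteq> rk ` {i\<in>S. k \<le> rk i}"
    proof
      fix x assume x: "x \<in> {k..<card S}"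
      then obtain i where "i \<in> S" "x = rk i" using rk_img by (metis atLeastLessThan_iff imageE lessThan_iff)
      then show "x \<in> rk ` {i\<in>S. k \<le> rk i}" using x by auto
    qed
  qed
  moreover have "card (rk ` {i\<in>S. k \<le> rk i}) = card {i\<in>S. k \<le> rk i}"
    by (rule card_image) (rule inj_on_subset[OF inj_rk], auto)
  ultimately show ?thesis by (simp add: rk_def)
qed

lemma sorted_nth_less_iff:
  fixes xs :: "'a::linorder list"
  assumes s: "sorted xs" and k: "1 \<le> k" "k \<le> length xs"
  shows "xs ! (k - 1) < v \<longleftrightarrow> k \<le> length (filter (\<lambda>x. x < v) xs)"
proof
  assume a: "xs ! (k - 1) < v"
  have "{..<k} \<subseteq> {i. i < length xs \<and> xs ! i < v}"
  proof
    fix i assume "i \<in> {..<k}"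
    then have "xs ! i \<le> xs ! (k - 1)" "i < length xs" using s k by (auto intro: sorted_nth_mono)
    then show "i \<in> {i. i < length xs \<and> xs ! i < v}" using a by auto
  qed
  then have "card {..<k} \<le> card {i. i < length xs \<and> xs ! i < v}" by (intro card_mono) auto
  then show "k \<le> length (filter (\<lambda>x. x < v) xs)" by (simp add: length_filter_conv_card)
next
  assume a: "k \<le> length (filter (\<lambda>x. x < v) xs)"
  show "xs ! (k - 1) < v"
  proof (rule ccontr)
    assume "\<not> xs ! (k - 1) < v"
    have "{i. i < length xs \<and> xs ! i < v} \<subseteq> {..<k - 1}"
    proof
      fix i assume i: "i \<in> {i. i < length xs \<and> xs ! i < v}"
      show "i \<in> {..<k - 1}"
      proof (rule ccontr)
        assume "i \<notin> {..<k - 1}"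
        then have "xs ! (k - 1) \<le> xs ! i" using s i by (intro sorted_nth_mono) auto
        then show False using i \<open>\<not> xs ! (k - 1) < v\<close> by auto
      qed
    qed
    then have "card {i. i < length xs \<and> xs ! i < v} \<le> card {..<k - 1}" by (intro card_mono) auto
    then show False using a k by (simp add: length_filter_conv_card)
  qed
qed

lemma conf_quantile_less_iff:
  fixes R :: "'i \<Rightarrow> real"
  assumes S: "finite S" and \<alpha>: "\<alpha> < 1"
  shows "conf_quantile \<alpha> S R < ereal v \<longleftrightarrow>
    (1 - \<alpha>) * (real (card S) + 1) \<le> real (card S) \<and>
    (1 - \<alpha>) * (real (card S) + 1) \<le> real (card {i\<in>S. R i < v})"
proof -
  define k where "k = nat \<lceil>(1 - \<alpha>) * (real (card S) + 1)\<rceil>"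
  have "0 < (1 - \<alpha>) * (real (card S) + 1)" using \<alpha> by simp
  then have k_pos: "1 \<le> k" unfolding k_def by linarith
  have k_le: "k \<le> m \<longleftrightarrow> (1 - \<alpha>) * (real (card S) + 1) \<le> real m" for m
    unfolding k_def by (rule nat_ceiling_le_eq)
  show ?thesis
  proof (cases "card S < k")
    case True
    then show ?thesis using k_le[of "card S"] by (simp add: conf_quantile_def k_def[symmetric])
  next
    case False
    define xs where "xs = sorted_list_of_multiset (image_mset R (mset_set S))"
    have len: "length xs = card S"
      unfolding xs_def by (metis mset_sorted_list_of_multiset size_image_mset size_mset size_mset_set)
    have "length (filter (\<lambda>x. x < v) xs) = size (filter_mset (\<lambda>x. x < v) (image_mset R (mset_set S)))"
      unfolding xs_def by (metis mset_filter mset_sorted_list_of_multiset size_mset)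
    also have "\<dots> = card {i\<in>S. R i < v}"
      using S by (simp add: filter_mset_image_mset filter_mset_mset_set)
    finally have count: "length (filter (\<lambda>x. x < v) xs) = card {i\<in>S. R i < v}" .
    have "conf_quantile \<alpha> S R < ereal v \<longleftrightarrow> xs ! (k - 1) < v"
      using False by (simp add: conf_quantile_def k_def[symmetric] xs_def Let_def)
    also have "\<dots> \<longleftrightarrow> k \<le> card {i\<in>S. R i < v}"
      using sorted_nth_less_iff[of xs k v] k_pos False len count by (simp add: xs_def)
    finally show ?thesis using k_le False by (simp add: not_less)
  qed
qed

lemma conf_quantile_cong:
  "(\<And>i. i \<in> S \<Longrightarrow> R i = R' i) \<Longrightarrow> conf_quantile \<alpha> S R = conf_quantile \<alpha> S R'"
proof -
  assume "\<And>i. i \<in> S \<Longrightarrow> R i = R' i"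
  then have eq: "image_mset R (mset_set S) = image_mset R' (mset_set S)"
    by (cases "finite S") (auto intro!: image_mset_cong)
  show ?thesis unfolding conf_quantile_def eq ..
qed

lemma conf_quantile_image:
  assumes "inj_on \<sigma> A"
  shows "conf_quantile \<alpha> (\<sigma> ` A) R = conf_quantile \<alpha> A (R \<circ> \<sigma>)"
proof -
  have "image_mset R (mset_set (\<sigma> ` A)) = image_mset (R \<circ> \<sigma>) (mset_set A)"
    using assms by (simp add: image_mset_mset_set[symmetric] multiset.map_comp)
  then show ?thesis unfolding conf_quantile_def card_image[OF assms] by (simp only:)
qed

lemma card_exceed_loo_quantile:
  fixes r :: "'i \<Rightarrow> real"
  assumes S: "finite S" and \<alpha>: "\<alpha> < 1"
  defines "k \<equiv> nat \<lceil>(1 - \<alpha>) * real (card S)\<rceil>"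
  shows "{i\<in>S. conf_quantile \<alpha> (S - {i}) r < ereal (r i)}
       = {i\<in>S. k < card S \<and> k \<le> card {l\<in>S. r l < r i}}"
proof -
  have k_le: "k \<le> m \<longleftrightarrow> (1 - \<alpha>) * real (card S) \<le> real m" for m
    unfolding k_def by (rule nat_ceiling_le_eq)
  have "conf_quantile \<alpha> (S - {i}) r < ereal (r i) \<longleftrightarrow> k < card S \<and> k \<le> card {l\<in>S. r l < r i}"
    if i: "i \<in> S" for i
  proof -
    have card_pos: "card S \<ge> 1" using S i by (auto simp: Suc_le_eq card_gt_0_iff)
    then have card: "card (S - {i}) = card S - 1" "real (card S - 1) + 1 = real (card S)"
      using S i by (simp_all add: of_nat_diff)
    have below: "{l\<in>S - {i}. r l < r i} = {l\<in>S. r l < r i}" by auto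
    show ?thesis
      unfolding conf_quantile_less_iff[OF finite_Diff[OF S] \<alpha>] below card k_le[symmetric]
      using card_pos by linarith
  qed
  then show ?thesis by auto
qed

lemma card_exceed_loo_quantile_le:
  fixes r :: "'i \<Rightarrow> real"
  assumes S: "finite S" and \<alpha>: "0 \<le> \<alpha>" "\<alpha> < 1"
  shows "real (card {i\<in>S. conf_quantile \<alpha> (S - {i}) r < ereal (r i)}) \<le> \<alpha> * real (card S)"
proof -
  define k where "k = nat \<lceil>(1 - \<alpha>) * real (card S)\<rceil>"
  have k_ge: "real (card S) - real k \<le> \<alpha> * real (card S)"
    unfolding k_def by (simp add: algebra_simps) linarith
  show ?thesis
  proof (cases "k < card S")
    case True
    then have "{i\<in>S. k < card S \<and> k \<le> card {l\<in>S. r l < r i}} = {i\<in>S. k \<le> card {l\<in>S. r l < r i}}"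
      by auto
    then have "real (card {i\<in>S. k < card S \<and> k \<le> card {l\<in>S. r l < r i}}) \<le> real (card S - k)"
      using card_rank_ge_le[OF S, of k r] by simp
    also have "\<dots> = real (card S) - real k" using True by (simp add: of_nat_diff)
    finally show ?thesis
      unfolding card_exceed_loo_quantile[OF S \<alpha>(2)] k_def[symmetric] using k_ge by linarith
  next
    case False
    then show ?thesis unfolding card_exceed_loo_quantile[OF S \<alpha>(2)] k_def[symmetric] using \<alpha> by simp
  qed
qed

lemma card_exceed_loo_quantile_ge:
  fixes r :: "'i \<Rightarrow> real"
  assumes S: "finite S" and inj: "inj_on r S" and \<alpha>: "\<alpha> < 1"
  shows "\<alpha> * real (card S) - 1 \<le> real (card {i\<in>S. conf_quantile \<alpha> (S - {i}) r < ereal (r i)})"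
proof -
  define k where "k = nat \<lceil>(1 - \<alpha>) * real (card S)\<rceil>"
  have "0 \<le> (1 - \<alpha>) * real (card S)" using \<alpha> by simp
  then have "real k < (1 - \<alpha>) * real (card S) + 1" unfolding k_def by linarith
  then have k_less: "real k < real (card S) - \<alpha> * real (card S) + 1" by (simp add: algebra_simps)
  show ?thesis
  proof (cases "k < card S")
    case True
    then have "{i\<in>S. k < card S \<and> k \<le> card {l\<in>S. r l < r i}} = {i\<in>S. k \<le> card {l\<in>S. r l < r i}}"
      by auto
    then have "real (card {i\<in>S. k < card S \<and> k \<le> card {l\<in>S. r l < r i}}) = real (card S - k)"
      using True card_rank_ge_eq[OF S inj, of k] by simp
    also have "\<dots> = real (card S) - real k" using True by (simp add: of_nat_diff)
    finally show ?thesis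
      unfolding card_exceed_loo_quantile[OF S \<alpha>] k_def[symmetric] using k_less by linarith
  next
    case False
    then show ?thesis using k_less by simp
  qed
qed

section \<open>The selective conformal setting\<close>

lemma ereal_not_in_interval_iff:
  "\<not> (ereal m - q \<le> ereal y \<and> ereal y \<le> ereal m + q) \<longleftrightarrow> q < ereal \<bar>y - m\<bar>"
  by (cases q) auto

lemma sum_if_mem_const:
  fixes c :: real
  shows "finite A \<Longrightarrow> B \<subseteq> A \<Longrightarrow> (\<Sum>i\<in>A. if i \<in> B then c else 0) = c * real (card B)"
  by (simp add: sum.If_cases Int_absorb1)

lemma measurable_card_Collect:
  assumes "finite B" "\<And>i. i \<in> B \<Longrightarrow> Measurable.pred N (P i)"
  shows "(\<lambda>x. real (card {i\<in>B. P i x})) \<in> borel_measurable N"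
proof -
  have "real (card {i\<in>B. P i x}) = (\<Sum>i\<in>B. if P i x then 1 else 0)" for x
    using assms(1) by (simp add: sum.inter_filter[symmetric])
  then show ?thesis
    by (simp only:) (intro borel_measurable_sum measurable_If; use assms(2) in \<open>auto simp: pred_def\<close>)
qed

locale scop_setting =
  fixes M :: "'w measure"
    and X :: "'i \<Rightarrow> 'w \<Rightarrow> real ^ 'd"
    and Y :: "'i \<Rightarrow> 'w \<Rightarrow> real"
    and \<mu> g :: "real ^ 'd \<Rightarrow> real"
    and \<tau> :: "('i \<Rightarrow> real) \<Rightarrow> real"
    and C U :: "'i set"
    and \<alpha> :: real
  assumes prob: "prob_space M"
    and finC: "finite C" and finU: "finite U" and disj: "C \<inter> U = {}"
    and alpha: "0 < \<alpha>" "\<alpha> < 1"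
    and mu_meas: "\<mu> \<in> borel_measurable borel"
    and g_meas: "g \<in> borel_measurable borel"
    and X_meas: "\<And>i. i \<in> C \<union> U \<Longrightarrow> X i \<in> borel_measurable M"
    and Y_meas: "\<And>i. i \<in> C \<union> U \<Longrightarrow> Y i \<in> borel_measurable M"
    and indep: "prob_space.indep_vars M (\<lambda>_. borel) (\<lambda>i \<omega>. (X i \<omega>, Y i \<omega>)) (C \<union> U)"
    and ident: "\<And>i k. i \<in> C \<union> U \<Longrightarrow> k \<in> C \<union> U \<Longrightarrow>
        distr M borel (\<lambda>\<omega>. (X i \<omega>, Y i \<omega>)) = distr M borel (\<lambda>\<omega>. (X k \<omega>, Y k \<omega>))"
    and tau_meas: "\<tau> \<in> borel_measurable (PiM (C \<union> U) (\<lambda>_. borel))"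
    and tau_sym: "\<And>\<pi> f. \<pi> permutes (C \<union> U) \<Longrightarrow> f \<in> extensional (C \<union> U) \<Longrightarrow> \<tau> (f \<circ> \<pi>) = \<tau> f"
begin

abbreviation "I \<equiv> C \<union> U"

lemma finite_I: "finite I"
  using finC finU by simp

definition score :: "('i \<Rightarrow> (real ^ 'd) \<times> real) \<Rightarrow> 'i \<Rightarrow> real" where
  "score x i = g (fst (x i))"

definition resid :: "('i \<Rightarrow> (real ^ 'd) \<times> real) \<Rightarrow> 'i \<Rightarrow> real" where
  "resid x i = \<bar>snd (x i) - \<mu> (fst (x i))\<bar>"

definition threshold :: "('i \<Rightarrow> (real ^ 'd) \<times> real) \<Rightarrow> real" where
  "threshold x = \<tau> (restrict (score x) I)"

definition sel :: "('i \<Rightarrow> (real ^ 'd) \<times> real) \<Rightarrow> 'i set \<Rightarrow> 'i set" where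
  "sel x A = {i\<in>A. score x i \<le> threshold x}"

definition miss :: "('i \<Rightarrow> (real ^ 'd) \<times> real) \<Rightarrow> 'i \<Rightarrow> bool" where
  "miss x j \<longleftrightarrow> conf_quantile \<alpha> (sel x C) (resid x) < ereal (resid x j)"

definition permute :: "('i \<Rightarrow> 'i) \<Rightarrow> ('i \<Rightarrow> (real ^ 'd) \<times> real) \<Rightarrow> 'i \<Rightarrow> (real ^ 'd) \<times> real" where
  "permute \<sigma> x = (\<lambda>i\<in>I. x (\<sigma> i))"

definition data :: "'w \<Rightarrow> 'i \<Rightarrow> (real ^ 'd) \<times> real" where
  "data \<omega> = (\<lambda>i\<in>I. (X i \<omega>, Y i \<omega>))"

lemma finite_sel: "finite A \<Longrightarrow> finite (sel x A)"
  by (simp add: sel_def)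

lemma sel_subset: "sel x A \<subseteq> A"
  by (auto simp: sel_def)

lemma selected_eq_sel_data:
  assumes "A \<subseteq> I"
  shows "selected \<tau> g C U X A \<omega> = sel (data \<omega>) A"
proof -
  have "tau_hat \<tau> g C U X \<omega> = threshold (data \<omega>)"
    unfolding tau_hat_def threshold_def
    by (rule arg_cong[where f = \<tau>]) (auto simp: data_def score_def restrict_def)
  then show ?thesis using assms by (auto simp: selected_def sel_def data_def score_def)
qed

lemma scop_miss_iff_miss_data:
  assumes j: "j \<in> I"
  shows "scop_miss \<alpha> \<mu> \<tau> g C U X Y j \<omega> \<longleftrightarrow> miss (data \<omega>) j"
proof -
  have q: "conf_quantile \<alpha> (sel (data \<omega>) C) (\<lambda>i. \<bar>Y i \<omega> - \<mu> (X i \<omega>)\<bar>)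
      = conf_quantile \<alpha> (sel (data \<omega>) C) (resid (data \<omega>))"
    by (rule conf_quantile_cong) (use sel_subset in \<open>force simp: resid_def data_def\<close>)
  have r: "resid (data \<omega>) j = \<bar>Y j \<omega> - \<mu> (X j \<omega>)\<bar>"
    using j by (simp add: resid_def data_def)
  show ?thesis
    unfolding scop_miss_def Let_def ereal_not_in_interval_iff miss_def r
      selected_eq_sel_data[OF Un_upper1] q ..
qed

lemma score_permute: "l \<in> I \<Longrightarrow> score (permute \<sigma> x) l = score x (\<sigma> l)"
  by (simp add: score_def permute_def)

lemma resid_permute: "l \<in> I \<Longrightarrow> resid (permute \<sigma> x) l = resid x (\<sigma> l)"
  by (simp add: resid_def permute_def)

lemma threshold_permute:
  assumes \<sigma>: "\<sigma> permutes I"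
  shows "threshold (permute \<sigma> x) = threshold x"
proof -
  have "restrict (score (permute \<sigma> x)) I = restrict (score x) I \<circ> \<sigma>"
    using permutes_in_image[OF \<sigma>] permutes_not_in[OF \<sigma>] by (auto simp: score_permute)
  then show ?thesis unfolding threshold_def using tau_sym[OF \<sigma>, of "restrict (score x) I"] by simp
qed

lemma image_sel_permute:
  assumes \<sigma>: "\<sigma> permutes I" and A: "A \<subseteq> I"
  shows "\<sigma> ` sel (permute \<sigma> x) A = sel x (\<sigma> ` A)"
  using A by (auto simp: sel_def score_permute threshold_permute[OF \<sigma>])

lemma card_sel_permute:
  assumes \<sigma>: "\<sigma> permutes I" and A: "A \<subseteq> I"
  shows "card (sel (permute \<sigma> x) A) = card (sel x (\<sigma> ` A))"
  by (metis image_sel_permute[OF assms] card_image permutes_inj inj_on_subset[OF _ subset_UNIV] \<sigma>)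

lemma conf_quantile_sel_permute:
  assumes \<sigma>: "\<sigma> permutes I"
  shows "conf_quantile \<alpha> (sel (permute \<sigma> x) C) (resid (permute \<sigma> x))
       = conf_quantile \<alpha> (sel x (\<sigma> ` C)) (resid x)"
proof -
  have "conf_quantile \<alpha> (sel (permute \<sigma> x) C) (resid (permute \<sigma> x))
      = conf_quantile \<alpha> (sel (permute \<sigma> x) C) (resid x \<circ> \<sigma>)"
    by (rule conf_quantile_cong) (use sel_subset in \<open>force simp: resid_permute\<close>)
  also have "\<dots> = conf_quantile \<alpha> (\<sigma> ` sel (permute \<sigma> x) C) (resid x)"
    by (rule conf_quantile_image[symmetric]) (rule inj_on_subset[OF permutes_inj[OF \<sigma>]], simp)
  finally show ?thesis by (simp add: image_sel_permute[OF \<sigma>])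
qed

subsection \<open>Swapping a test index with a calibration index\<close>

context
  fixes j i :: 'i
  assumes j: "j \<in> U" and i: "i \<in> insert j C"
begin

lemma transpose_permutes: "Transposition.transpose i j permutes I"
  using i j by (intro permutes_swap_id) auto

lemma transpose_image_calib: "Transposition.transpose i j ` C = insert j C - {i}"
  using i j disj by (cases "i = j") (auto simp: Transposition.transpose_def image_iff)

lemma transpose_image_test: "Transposition.transpose i j ` U = insert i (U - {j})"
  using i j disj by (cases "i = j") (auto simp: Transposition.transpose_def image_iff)

lemma test_mem_sel_swap_iff: "j \<in> sel (permute (Transposition.transpose i j) x) U \<longleftrightarrow> i \<in> sel x (insert j C)"
  using i j by (auto simp: sel_def score_permute threshold_permute[OF transpose_permutes])

lemma card_sel_test_swap:
  assumes "i \<in> sel x (insert j C)"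
  shows "card (sel (permute (Transposition.transpose i j) x) U) = card (sel x (U - {j})) + 1"
proof -
  have "sel x (insert i (U - {j})) = insert i (sel x (U - {j}))" "i \<notin> sel x (U - {j})"
    using assms i disj by (auto simp: sel_def)
  then show ?thesis
    by (simp add: card_sel_permute[OF transpose_permutes] transpose_image_test finite_sel finU)
qed

lemma card_sel_calib_swap:
  "card (sel (permute (Transposition.transpose i j) x) C) = card (sel x (insert j C) - {i})"
proof -
  have "sel x (insert j C - {i}) = sel x (insert j C) - {i}" by (auto simp: sel_def)
  then show ?thesis by (simp add: card_sel_permute[OF transpose_permutes] transpose_image_calib)
qed

lemma miss_swap_iff:
  "miss (permute (Transposition.transpose i j) x) j
     \<longleftrightarrow> conf_quantile \<alpha> (sel x (insert j C) - {i}) (resid x) < ereal (resid x i)"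
proof -
  have "sel x (insert j C - {i}) = sel x (insert j C) - {i}" by (auto simp: sel_def)
  then show ?thesis
    using j unfolding miss_def conf_quantile_sel_permute[OF transpose_permutes] transpose_image_calib
    by (simp add: resid_permute)
qed

end

definition orbit_sum :: "(('i \<Rightarrow> (real ^ 'd) \<times> real) \<Rightarrow> real) \<Rightarrow> 'i \<Rightarrow> ('i \<Rightarrow> (real ^ 'd) \<times> real) \<Rightarrow> real" where
  "orbit_sum h j x = (\<Sum>i\<in>insert j C. h (permute (Transposition.transpose i j) x))"

text \<open>
  After the swap \<open>(i j)\<close> a selected \<open>j\<close> sees the selected test set \<open>S\<^sub>u - {j} \<union> {i}\<close>, whose
  size does not depend on \<open>i\<close>; so a weight \<open>W |S\<^sub>u|\<close> factors out of the orbit sums.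
  \<open>W = 1\<close> gives the conditional miscoverage, \<open>W s = 1 / max s 1\<close> the FCR.
\<close>

definition sel_term :: "(real \<Rightarrow> real) \<Rightarrow> 'i \<Rightarrow> ('i \<Rightarrow> (real ^ 'd) \<times> real) \<Rightarrow> real" where
  "sel_term W j x = (if j \<in> sel x U then W (card (sel x U)) else 0)"

definition miss_term :: "(real \<Rightarrow> real) \<Rightarrow> 'i \<Rightarrow> ('i \<Rightarrow> (real ^ 'd) \<times> real) \<Rightarrow> real" where
  "miss_term W j x = (if j \<in> sel x U \<and> miss x j then W (card (sel x U)) else 0)"

definition slack_term :: "(real \<Rightarrow> real) \<Rightarrow> 'i \<Rightarrow> ('i \<Rightarrow> (real ^ 'd) \<times> real) \<Rightarrow> real" where
  "slack_term W j x = (if j \<in> sel x U then W (card (sel x U)) / (real (card (sel x C)) + 1) else 0)"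

context
  fixes j :: 'i and x :: "'i \<Rightarrow> (real ^ 'd) \<times> real" and W :: "real \<Rightarrow> real"
  assumes j: "j \<in> U"
begin

lemma orbit_sum_sel_term:
  "orbit_sum (sel_term W j) j x = W (card (sel x (U - {j})) + 1) * card (sel x (insert j C))"
proof -
  have "orbit_sum (sel_term W j) j x
      = (\<Sum>i\<in>insert j C. if i \<in> sel x (insert j C) then W (card (sel x (U - {j})) + 1) else 0)"
    unfolding orbit_sum_def
    by (rule sum.cong) (auto simp: sel_term_def test_mem_sel_swap_iff card_sel_test_swap j)
  then show ?thesis by (simp add: sum_if_mem_const finC sel_subset)
qed

lemma orbit_sum_slack_term:
  "orbit_sum (slack_term W j) j x = (if sel x (insert j C) = {} then 0 else W (card (sel x (U - {j})) + 1))"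
proof -
  define S where "S = sel x (insert j C)"
  have "orbit_sum (slack_term W j) j x
      = (\<Sum>i\<in>insert j C. if i \<in> S then W (card (sel x (U - {j})) + 1) / card S else 0)"
    unfolding orbit_sum_def
  proof (rule sum.cong)
    fix i assume i: "i \<in> insert j C"
    show "slack_term W j (permute (Transposition.transpose i j) x) = (if i \<in> S then W (card (sel x (U - {j})) + 1) / card S else 0)"
    proof (cases "i \<in> S")
      case True
      have fin: "finite S" using finC by (simp add: S_def finite_sel)
      then have "0 < card S" using True by (auto simp: card_gt_0_iff)
      then have "real (card (S - {i})) + 1 = card S" using True fin by (simp add: of_nat_diff)
      then show ?thesis using True j i
        by (simp add: slack_term_def test_mem_sel_swap_iff card_sel_test_swap card_sel_calib_swap S_def)
    qed (use i j in \<open>simp add: slack_term_def test_mem_sel_swap_iff S_def\<close>)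
  qed simp
  also have "\<dots> = (if S = {} then 0 else W (card (sel x (U - {j})) + 1))"
    using finC by (simp add: sum_if_mem_const S_def sel_subset finite_sel)
  finally show ?thesis by (simp add: S_def)
qed

lemma orbit_sum_miss_term:
  "orbit_sum (miss_term W j) j x = W (card (sel x (U - {j})) + 1) *
     card {i\<in>sel x (insert j C). conf_quantile \<alpha> (sel x (insert j C) - {i}) (resid x) < ereal (resid x i)}"
proof -
  define B where
    "B = {i\<in>sel x (insert j C). conf_quantile \<alpha> (sel x (insert j C) - {i}) (resid x) < ereal (resid x i)}"
  have "orbit_sum (miss_term W j) j x
      = (\<Sum>i\<in>insert j C. if i \<in> B then W (card (sel x (U - {j})) + 1) else 0)"
    unfolding orbit_sum_def B_def
    by (rule sum.cong) (auto simp: miss_term_def test_mem_sel_swap_iff card_sel_test_swap miss_swap_iff j)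
  also have "\<dots> = W (card (sel x (U - {j})) + 1) * card B"
    by (rule sum_if_mem_const) (use finC sel_subset in \<open>auto simp: B_def\<close>)
  finally show ?thesis unfolding B_def .
qed

lemma orbit_sum_miss_term_le:
  assumes W: "\<And>s. 0 \<le> W s"
  shows "orbit_sum (miss_term W j) j x \<le> \<alpha> * orbit_sum (sel_term W j) j x"
proof -
  define S where "S = sel x (insert j C)"
  have "card {i\<in>S. conf_quantile \<alpha> (S - {i}) (resid x) < ereal (resid x i)} \<le> \<alpha> * card S"
    using card_exceed_loo_quantile_le[of S \<alpha> "resid x"] alpha finC by (simp add: S_def finite_sel)
  from mult_left_mono[OF this W[of "card (sel x (U - {j})) + 1"]]
  show ?thesis
    unfolding orbit_sum_miss_term orbit_sum_sel_term S_def[symmetric] by (simp add: algebra_simps)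
qed

lemma orbit_sum_miss_term_ge:
  assumes W: "\<And>s. 0 \<le> W s" and inj: "inj_on (resid x) I"
  shows "\<alpha> * orbit_sum (sel_term W j) j x - orbit_sum (slack_term W j) j x \<le> orbit_sum (miss_term W j) j x"
proof -
  define S where "S = sel x (insert j C)"
  have "inj_on (resid x) S" using inj by (rule inj_on_subset) (use j in \<open>auto simp: S_def sel_def\<close>)
  from card_exceed_loo_quantile_ge[OF _ this alpha(2)]
  have "\<alpha> * card S - 1 \<le> card {i\<in>S. conf_quantile \<alpha> (S - {i}) (resid x) < ereal (resid x i)}"
    using finC by (simp add: S_def finite_sel)
  from mult_left_mono[OF this W[of "card (sel x (U - {j})) + 1"]]
  show ?thesis
    unfolding orbit_sum_miss_term orbit_sum_sel_term orbit_sum_slack_term S_def[symmetric]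
    by (auto simp: algebra_simps)
qed

end

abbreviation "Samples \<equiv> PiM I (\<lambda>_. borel :: ((real ^ 'd) \<times> real) measure)"

lemma measurable_sample_fst[measurable]: "i \<in> I \<Longrightarrow> (\<lambda>x. fst (x i)) \<in> borel_measurable Samples"
proof -
  assume "i \<in> I"
  then have "(\<lambda>x. x i) \<in> Samples \<rightarrow>\<^sub>M borel" by (rule measurable_component_singleton)
  moreover have "fst \<in> (borel :: ((real ^ 'd) \<times> real) measure) \<rightarrow>\<^sub>M borel"
    using measurable_fst[of "borel :: (real ^ 'd) measure" "borel :: real measure"] unfolding borel_prod .
  ultimately show ?thesis by (rule measurable_compose)
qed

lemma measurable_sample_snd[measurable]: "i \<in> I \<Longrightarrow> (\<lambda>x. snd (x i)) \<in> borel_measurable Samples"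
proof -
  assume "i \<in> I"
  then have "(\<lambda>x. x i) \<in> Samples \<rightarrow>\<^sub>M borel" by (rule measurable_component_singleton)
  moreover have "snd \<in> (borel :: ((real ^ 'd) \<times> real) measure) \<rightarrow>\<^sub>M borel"
    using measurable_snd[of "borel :: (real ^ 'd) measure" "borel :: real measure"] unfolding borel_prod .
  ultimately show ?thesis by (rule measurable_compose)
qed

lemma measurable_score[measurable]: "i \<in> I \<Longrightarrow> (\<lambda>x. score x i) \<in> borel_measurable Samples"
  unfolding score_def using g_meas by measurable

lemma measurable_resid[measurable]: "i \<in> I \<Longrightarrow> (\<lambda>x. resid x i) \<in> borel_measurable Samples"
  unfolding resid_def using mu_meas by measurable

lemma measurable_threshold[measurable]: "threshold \<in> borel_measurable Samples"
  unfolding threshold_def[abs_def]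
  by (rule measurable_compose[OF measurable_restrict tau_meas]) (rule measurable_score)

lemma pred_score_le_threshold: "i \<in> I \<Longrightarrow> Measurable.pred Samples (\<lambda>x. score x i \<le> threshold x)"
  unfolding pred_def by (rule borel_measurable_le[OF measurable_score measurable_threshold])

lemma pred_mem_sel: "j \<in> I \<Longrightarrow> Measurable.pred Samples (\<lambda>x. j \<in> sel x A)"
  unfolding sel_def using pred_score_le_threshold[of j] by (cases "j \<in> A") auto

lemma measurable_card_sel: "A \<subseteq> I \<Longrightarrow> (\<lambda>x. real (card (sel x A))) \<in> borel_measurable Samples"
  unfolding sel_def
  by (rule measurable_card_Collect) (use finite_I finite_subset pred_score_le_threshold in auto)

lemma pred_miss: "j \<in> I \<Longrightarrow> Measurable.pred Samples (\<lambda>x. miss x j)"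
proof -
  assume j: "j \<in> I"
  have rank: "(\<lambda>x. real (card {i\<in>sel x C. resid x i < resid x j})) \<in> borel_measurable Samples"
  proof -
    have "{i\<in>sel x C. resid x i < resid x j} = {i\<in>C. score x i \<le> threshold x \<and> resid x i < resid x j}" for x
      by (auto simp: sel_def)
    moreover have "(\<lambda>x. real (card {i\<in>C. score x i \<le> threshold x \<and> resid x i < resid x j}))
        \<in> borel_measurable Samples"
    proof (rule measurable_card_Collect[OF finC])
      fix i assume "i \<in> C"
      then have i: "i \<in> I" by simp
      have "Measurable.pred Samples (\<lambda>x. resid x i < resid x j)"
        unfolding pred_def by (rule borel_measurable_less[OF measurable_resid[OF i] measurable_resid[OF j]])
      then show "Measurable.pred Samples (\<lambda>x. score x i \<le> threshold x \<and> resid x i < resid x j)"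
        using pred_score_le_threshold[OF i] by (rule pred_intros_logic(3)[rotated])
    qed
    ultimately show ?thesis by simp
  qed
  have size: "(\<lambda>x. real (card (sel x C))) \<in> borel_measurable Samples"
    by (rule measurable_card_sel) simp
  have level: "(\<lambda>x. (1 - \<alpha>) * (real (card (sel x C)) + 1)) \<in> borel_measurable Samples"
    using size by measurable
  have "miss x j \<longleftrightarrow> (1 - \<alpha>) * (real (card (sel x C)) + 1) \<le> real (card (sel x C)) \<and>
      (1 - \<alpha>) * (real (card (sel x C)) + 1) \<le> real (card {i\<in>sel x C. resid x i < resid x j})" for x
    unfolding miss_def by (rule conf_quantile_less_iff[OF finite_sel[OF finC] alpha(2)])
  then show ?thesis
    unfolding pred_def by (simp only:) (intro sets.sets_Collect_conj borel_measurable_le level size rank)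
qed

lemma pred_inj_resid: "Measurable.pred Samples (\<lambda>x. inj_on (resid x) I)"
proof -
  have "Measurable.pred Samples (\<lambda>x. resid x a = resid x b)" if "a \<in> I" "b \<in> I" for a b
    unfolding pred_def using that by (intro borel_measurable_eq measurable_resid)
  then have "Measurable.pred Samples (\<lambda>x. \<forall>a\<in>I. \<forall>b\<in>I. resid x a = resid x b \<longrightarrow> a = b)"
    by (intro pred_intros_finite pred_intros_logic finite_I) auto
  then show ?thesis unfolding inj_on_def .
qed

context
  fixes j :: 'i and W :: "real \<Rightarrow> real"
  assumes j: "j \<in> U" and W: "W \<in> borel_measurable borel"
begin

lemma measurable_weight_card_sel_test: "(\<lambda>x. W (card (sel x U))) \<in> borel_measurable Samples"
  using measurable_compose[OF measurable_card_sel[OF Un_upper2] W] .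

lemma measurable_terms:
  "sel_term W j \<in> borel_measurable Samples"
  "miss_term W j \<in> borel_measurable Samples"
  "slack_term W j \<in> borel_measurable Samples"
proof -
  have jI: "j \<in> I" using j by simp
  note [measurable] = measurable_weight_card_sel_test pred_mem_sel[OF jI] pred_miss[OF jI]
  show "sel_term W j \<in> borel_measurable Samples" unfolding sel_term_def[abs_def] by measurable
  show "miss_term W j \<in> borel_measurable Samples" unfolding miss_term_def[abs_def] by measurable
  have "(\<lambda>x. W (card (sel x U)) / (real (card (sel x C)) + 1)) \<in> borel_measurable Samples"
    by (intro borel_measurable_divide borel_measurable_add measurable_weight_card_sel_test
        measurable_card_sel borel_measurable_const) simp
  then show "slack_term W j \<in> borel_measurable Samples"
    unfolding slack_term_def[abs_def]
    by (rule measurable_If[OF _ borel_measurable_const pred_mem_sel[OF jI, unfolded pred_def]])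
qed

end

subsection \<open>Exchangeability\<close>

definition marginal :: "'i \<Rightarrow> ((real ^ 'd) \<times> real) measure" where
  "marginal i = distr M borel (\<lambda>\<omega>. (X i \<omega>, Y i \<omega>))"

definition law :: "('i \<Rightarrow> (real ^ 'd) \<times> real) measure" where
  "law = distr M Samples data"

lemma measurable_data: "data \<in> M \<rightarrow>\<^sub>M Samples"
  unfolding data_def[abs_def]
  by (rule measurable_restrict) (intro borel_measurable_Pair X_meas Y_meas; assumption)

lemma prob_space_law: "prob_space law"
  unfolding law_def by (rule prob_space.prob_space_distr[OF prob measurable_data])

lemma sets_law [measurable_cong]: "sets law = sets Samples"
  unfolding law_def by simp

lemma law_eq_PiM_marginal:
  assumes "I \<noteq> {}"
  shows "law = PiM I marginal"
proof -
  have "\<And>i. i \<in> I \<Longrightarrow> (\<lambda>\<omega>. (X i \<omega>, Y i \<omega>)) \<in> M \<rightarrow>\<^sub>M borel"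
    by (intro borel_measurable_Pair X_meas Y_meas)
  then show ?thesis
    using prob_space.indep_vars_iff_distr_eq_PiM'[OF prob assms, where X = "\<lambda>i \<omega>. (X i \<omega>, Y i \<omega>)"] indep
    by (simp add: law_def marginal_def[abs_def] data_def[abs_def])
qed

lemma measurable_permute: "\<sigma> permutes I \<Longrightarrow> permute \<sigma> \<in> Samples \<rightarrow>\<^sub>M Samples"
  unfolding permute_def[abs_def]
  by (rule measurable_restrict) (rule measurable_component_singleton, use permutes_in_image[of \<sigma> I] in blast)

lemma distr_law_permute:
  assumes \<sigma>: "\<sigma> permutes I"
  shows "distr law Samples (permute \<sigma>) = law"
proof (cases "I = {}")
  case True
  have "permute \<sigma> x = x" if "x \<in> space law" for x
  proof -
    have "x \<in> extensional I" using that by (simp add: law_def space_PiM PiE_def)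
    then show ?thesis unfolding permute_def by (intro ext) (simp add: True extensional_def)
  qed
  then have "distr law Samples (permute \<sigma>) = distr law Samples (\<lambda>x. x)"
    by (intro distr_cong) simp_all
  also have "\<dots> = law" by (rule distr_id2[OF sets_law[symmetric]])
  finally show ?thesis .
next
  case False
  have marginal_prob: "i \<in> I \<Longrightarrow> prob_space (marginal i)" for i
    unfolding marginal_def by (intro prob_space.prob_space_distr[OF prob] borel_measurable_Pair X_meas Y_meas)
  have "distr (PiM I marginal) (PiM I (\<lambda>i. marginal (\<sigma> i))) (permute \<sigma>) = PiM I (\<lambda>i. marginal (\<sigma> i))"
    unfolding permute_def[abs_def]
    by (rule distr_PiM_reindex) (use marginal_prob permutes_inj_on[OF \<sigma>] permutes_in_image[OF \<sigma>] in auto)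
  moreover have "PiM I (\<lambda>i. marginal (\<sigma> i)) = PiM I marginal"
  proof (rule PiM_cong)
    fix i assume "i \<in> I"
    then show "marginal (\<sigma> i) = marginal i"
      unfolding marginal_def using ident permutes_in_image[OF \<sigma>] by blast
  qed simp
  moreover have "distr law Samples (permute \<sigma>) = distr (PiM I marginal) (PiM I marginal) (permute \<sigma>)"
    by (rule distr_cong) (auto simp: law_eq_PiM_marginal[OF False] marginal_def intro!: sets_PiM_cong)
  ultimately show ?thesis using law_eq_PiM_marginal[OF False] by simp
qed

lemma measurable_law_iff: "h \<in> borel_measurable law \<longleftrightarrow> h \<in> borel_measurable Samples"
  by (simp add: measurable_cong_sets[OF sets_law refl])

lemma integral_permute:
  fixes h :: "_ \<Rightarrow> real"
  assumes \<sigma>: "\<sigma> permutes I" and h: "h \<in> borel_measurable Samples"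
  shows "(\<integral>x. h (permute \<sigma> x) \<partial>law) = (\<integral>x. h x \<partial>law)"
proof -
  have "permute \<sigma> \<in> law \<rightarrow>\<^sub>M Samples"
    using measurable_permute[OF \<sigma>] by (simp add: measurable_cong_sets[OF sets_law refl])
  then show ?thesis using integral_distr[OF _ h] distr_law_permute[OF \<sigma>] by metis
qed

lemma integrable_law_bounded:
  fixes h :: "_ \<Rightarrow> real"
  assumes h: "h \<in> borel_measurable Samples" and B: "\<And>x. \<bar>h x\<bar> \<le> B"
  shows "integrable law h"
proof -
  interpret law: prob_space law by (rule prob_space_law)
  show ?thesis by (rule law.integrable_const_bound[where B = B]) (use B h in \<open>auto simp: measurable_law_iff\<close>)
qed

context
  fixes j :: 'i and h :: "('i \<Rightarrow> (real ^ 'd) \<times> real) \<Rightarrow> real" and B :: real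
  assumes j: "j \<in> U" and h: "h \<in> borel_measurable Samples" and B: "\<And>x. \<bar>h x\<bar> \<le> B"
begin

lemma integrable_permute_transpose:
  "i \<in> insert j C \<Longrightarrow> integrable law (\<lambda>x. h (permute (Transposition.transpose i j) x))"
  by (rule integrable_law_bounded[where B = B])
     (use measurable_compose[OF measurable_permute[OF transpose_permutes[OF j]] h] B in auto)

lemma integrable_orbit_sum: "integrable law (orbit_sum h j)"
  unfolding orbit_sum_def by (rule Bochner_Integration.integrable_sum) (rule integrable_permute_transpose)

lemma integral_orbit_sum: "(\<integral>x. orbit_sum h j x \<partial>law) = card (insert j C) * (\<integral>x. h x \<partial>law)"
proof -
  have "(\<integral>x. orbit_sum h j x \<partial>law) = (\<Sum>i\<in>insert j C. \<integral>x. h (permute (Transposition.transpose i j) x) \<partial>law)"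
    unfolding orbit_sum_def by (rule Bochner_Integration.integral_sum) (rule integrable_permute_transpose)
  also have "\<dots> = (\<Sum>i\<in>insert j C. \<integral>x. h x \<partial>law)"
    by (rule sum.cong) (auto simp: integral_permute[OF transpose_permutes[OF j] h])
  finally show ?thesis by simp
qed

end

lemma abs_terms_le_1:
  assumes W: "\<And>s. 0 \<le> W s \<and> W s \<le> 1"
  shows "\<bar>sel_term W j x\<bar> \<le> 1" "\<bar>miss_term W j x\<bar> \<le> 1" "\<bar>slack_term W j x\<bar> \<le> 1"
proof -
  show "\<bar>sel_term W j x\<bar> \<le> 1" "\<bar>miss_term W j x\<bar> \<le> 1"
    unfolding sel_term_def miss_term_def using W by auto
  have "W s / (real n + 1) \<le> 1" for s n
    using W[of s] order.trans[OF divide_left_mono[of 1 "real n + 1" "W s"]] by auto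
  then show "\<bar>slack_term W j x\<bar> \<le> 1" unfolding slack_term_def using W by auto
qed

context
  fixes j :: 'i and W :: "real \<Rightarrow> real"
  assumes j: "j \<in> U" and W_meas: "W \<in> borel_measurable borel" and W: "\<And>s. 0 \<le> W s \<and> W s \<le> 1"
begin

lemma integral_miss_term_le: "(\<integral>x. miss_term W j x \<partial>law) \<le> \<alpha> * (\<integral>x. sel_term W j x \<partial>law)"
proof -
  note miss = measurable_terms(2)[OF j W_meas] abs_terms_le_1(2)[OF W]
  note sel = measurable_terms(1)[OF j W_meas] abs_terms_le_1(1)[OF W]
  have "card (insert j C) * (\<integral>x. miss_term W j x \<partial>law) = (\<integral>x. orbit_sum (miss_term W j) j x \<partial>law)"
    by (rule integral_orbit_sum[OF j miss, symmetric])
  also have "\<dots> \<le> (\<integral>x. \<alpha> * orbit_sum (sel_term W j) j x \<partial>law)"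
    by (intro integral_mono integrable_orbit_sum[OF j miss] integrable_mult_right integrable_orbit_sum[OF j sel]
        orbit_sum_miss_term_le[OF j]) (use W in auto)
  also have "\<dots> = card (insert j C) * (\<alpha> * (\<integral>x. sel_term W j x \<partial>law))"
    using integral_orbit_sum[OF j sel] by simp
  finally show ?thesis using finC by (simp add: card_gt_0_iff)
qed

lemma integral_miss_term_ge:
  assumes inj: "AE x in law. inj_on (resid x) I"
  shows "\<alpha> * (\<integral>x. sel_term W j x \<partial>law) - (\<integral>x. slack_term W j x \<partial>law) \<le> (\<integral>x. miss_term W j x \<partial>law)"
proof -
  note miss = measurable_terms(2)[OF j W_meas] abs_terms_le_1(2)[OF W]
  note sel = measurable_terms(1)[OF j W_meas] abs_terms_le_1(1)[OF W]
  note slack = measurable_terms(3)[OF j W_meas] abs_terms_le_1(3)[OF W]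
  have "card (insert j C) * (\<alpha> * (\<integral>x. sel_term W j x \<partial>law) - (\<integral>x. slack_term W j x \<partial>law))
      = (\<integral>x. \<alpha> * orbit_sum (sel_term W j) j x - orbit_sum (slack_term W j) j x \<partial>law)"
    using integral_orbit_sum[OF j sel] integral_orbit_sum[OF j slack]
      integrable_orbit_sum[OF j sel] integrable_orbit_sum[OF j slack]
    by (simp add: algebra_simps)
  also have "\<dots> \<le> (\<integral>x. orbit_sum (miss_term W j) j x \<partial>law)"
  proof (rule integral_mono_AE)
    show "AE x in law. \<alpha> * orbit_sum (sel_term W j) j x - orbit_sum (slack_term W j) j x
        \<le> orbit_sum (miss_term W j) j x"
      using inj by eventually_elim (rule orbit_sum_miss_term_ge[OF j], use W in auto)
  qed (use integrable_orbit_sum[OF j sel] integrable_orbit_sum[OF j slack]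
        integrable_orbit_sum[OF j miss] in auto)
  also have "\<dots> = card (insert j C) * (\<integral>x. miss_term W j x \<partial>law)"
    by (rule integral_orbit_sum[OF j miss])
  finally show ?thesis using finC by (simp add: card_gt_0_iff mult_le_cancel_left_pos)
qed

end

subsection \<open>Coverage bounds\<close>

lemma integral_data:
  fixes h :: "_ \<Rightarrow> real"
  assumes "h \<in> borel_measurable Samples"
  shows "(\<integral>\<omega>. h (data \<omega>) \<partial>M) = (\<integral>x. h x \<partial>law)"
  unfolding law_def using integral_distr[OF measurable_data assms] by simp

lemma measure_data:
  assumes P: "Measurable.pred Samples P"
  shows "measure M {\<omega>\<in>space M. P (data \<omega>)} = (\<integral>x. (if P x then 1 else 0) \<partial>law)"
proof -
  define S where "S = {x\<in>space Samples. P x}"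
  have S: "S \<in> sets Samples" using P unfolding S_def pred_def .
  have "data -` S \<inter> space M = {\<omega>\<in>space M. P (data \<omega>)}"
    using measurable_space[OF measurable_data] by (auto simp: S_def)
  then have "measure M {\<omega>\<in>space M. P (data \<omega>)} = measure law S"
    unfolding law_def using measure_distr[OF measurable_data S] by simp
  also have "\<dots> = (\<integral>x. indicator S x \<partial>law)"
    using S sets.sets_into_space[OF S] by (simp add: law_def Int_absorb2)
  also have "\<dots> = (\<integral>x. (if P x then 1 else 0) \<partial>law)"
    by (rule Bochner_Integration.integral_cong) (auto simp: S_def law_def indicator_def)
  finally show ?thesis .
qed

lemma AE_law_inj_resid:
  assumes "AE \<omega> in M. inj_on (\<lambda>i. \<bar>Y i \<omega> - \<mu> (X i \<omega>)\<bar>) I"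
  shows "AE x in law. inj_on (resid x) I"
proof -
  have "AE \<omega> in M. inj_on (resid (data \<omega>)) I"
    using assms by eventually_elim (rule inj_on_cong[THEN iffD1, rotated], simp_all add: resid_def data_def)
  then show ?thesis
    using AE_distr_iff[OF measurable_data, of "\<lambda>x. inj_on (resid x) I"] pred_inj_resid
    unfolding law_def pred_def by simp
qed

lemma cond_prob_scop_miss_le:
  assumes j: "j \<in> U" and pos: "prob_space.prob M {\<omega> \<in> space M. j \<in> selected \<tau> g C U X U \<omega>} > 0"
  shows "cond_prob M (\<lambda>\<omega>. scop_miss \<alpha> \<mu> \<tau> g C U X Y j \<omega>) (\<lambda>\<omega>. j \<in> selected \<tau> g C U X U \<omega>) \<le> \<alpha>"
proof -
  have jI: "j \<in> I" using j by simp
  note sel_U = selected_eq_sel_data[OF Un_upper2]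
  have "Measurable.pred Samples (\<lambda>x. j \<in> sel x U \<and> miss x j)"
    using pred_mem_sel[OF jI] pred_miss[OF jI] by measurable
  then have miss: "measure M {\<omega>\<in>space M. scop_miss \<alpha> \<mu> \<tau> g C U X Y j \<omega> \<and> j \<in> selected \<tau> g C U X U \<omega>}
      = (\<integral>x. miss_term (\<lambda>_. 1) j x \<partial>law)"
    using measure_data[of "\<lambda>x. j \<in> sel x U \<and> miss x j"]
    by (simp add: sel_U scop_miss_iff_miss_data[OF jI] miss_term_def conj_commute)
  have sel: "measure M {\<omega>\<in>space M. j \<in> selected \<tau> g C U X U \<omega>} = (\<integral>x. sel_term (\<lambda>_. 1) j x \<partial>law)"
    using measure_data[OF pred_mem_sel[OF jI, of U]] by (simp add: sel_U sel_term_def)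
  have "(\<integral>x. miss_term (\<lambda>_. 1) j x \<partial>law) \<le> \<alpha> * (\<integral>x. sel_term (\<lambda>_. 1) j x \<partial>law)"
    by (rule integral_miss_term_le[OF j]) auto
  then show ?thesis using pos unfolding cond_prob_def miss sel by (simp add: divide_le_eq)
qed

definition fcr_weight :: "real \<Rightarrow> real" where
  "fcr_weight s = 1 / max s 1"

lemma fcr_weight: "0 \<le> fcr_weight s \<and> fcr_weight s \<le> 1" "fcr_weight \<in> borel_measurable borel"
  unfolding fcr_weight_def[abs_def] by (auto simp: field_simps) measurable

lemma sum_miss_term_fcr_weight:
  "(\<Sum>j\<in>U. miss_term fcr_weight j x) = card {j\<in>sel x U. miss x j} / max (card (sel x U)) 1"
proof -
  have "(\<Sum>j\<in>U. miss_term fcr_weight j x)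
      = (\<Sum>j\<in>U. if j \<in> {j\<in>sel x U. miss x j} then fcr_weight (card (sel x U)) else 0)"
    by (rule sum.cong) (auto simp: miss_term_def)
  also have "\<dots> = fcr_weight (card (sel x U)) * card {j\<in>sel x U. miss x j}"
    by (rule sum_if_mem_const) (auto simp: finU sel_def)
  finally show ?thesis by (simp add: fcr_weight_def of_nat_max)
qed

lemma sum_sel_term_fcr_weight: "(\<Sum>j\<in>U. sel_term fcr_weight j x) = (if 0 < card (sel x U) then 1 else 0)"
proof -
  have "(\<Sum>j\<in>U. sel_term fcr_weight j x) = (\<Sum>j\<in>U. if j \<in> sel x U then fcr_weight (card (sel x U)) else 0)"
    by (rule sum.cong) (auto simp: sel_term_def)
  also have "\<dots> = fcr_weight (card (sel x U)) * card (sel x U)"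
    by (rule sum_if_mem_const) (auto simp: finU sel_def)
  finally show ?thesis by (simp add: fcr_weight_def)
qed

lemma sum_slack_term_fcr_weight_le: "(\<Sum>j\<in>U. slack_term fcr_weight j x) \<le> 1 / (real (card (sel x C)) + 1)"
proof -
  have "(\<Sum>j\<in>U. slack_term fcr_weight j x)
      = (\<Sum>j\<in>U. if j \<in> sel x U then fcr_weight (card (sel x U)) / (real (card (sel x C)) + 1) else 0)"
    by (rule sum.cong) (auto simp: slack_term_def)
  also have "\<dots> = fcr_weight (card (sel x U)) * card (sel x U) / (real (card (sel x C)) + 1)"
    using sum_if_mem_const[OF finU sel_subset] by simp
  also have "\<dots> \<le> 1 / (real (card (sel x C)) + 1)"
    by (rule divide_right_mono) (auto simp: fcr_weight_def)
  finally show ?thesis .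
qed

lemma integrable_terms_fcr_weight:
  assumes "j \<in> U"
  shows "integrable law (sel_term fcr_weight j)" "integrable law (miss_term fcr_weight j)"
    "integrable law (slack_term fcr_weight j)"
  using integrable_law_bounded[OF measurable_terms(1)[OF assms fcr_weight(2)] abs_terms_le_1(1)[OF fcr_weight(1)]]
    integrable_law_bounded[OF measurable_terms(2)[OF assms fcr_weight(2)] abs_terms_le_1(2)[OF fcr_weight(1)]]
    integrable_law_bounded[OF measurable_terms(3)[OF assms fcr_weight(2)] abs_terms_le_1(3)[OF fcr_weight(1)]]
  by auto

lemma scop_FCR_eq_sum_integral: "scop_FCR M \<alpha> \<mu> \<tau> g C U X Y = (\<Sum>j\<in>U. \<integral>x. miss_term fcr_weight j x \<partial>law)"
proof -
  have "scop_FCR M \<alpha> \<mu> \<tau> g C U X Y = (\<integral>\<omega>. (\<Sum>j\<in>U. miss_term fcr_weight j (data \<omega>)) \<partial>M)"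
    unfolding scop_FCR_def
  proof (rule Bochner_Integration.integral_cong[OF refl])
    fix \<omega>
    have "{j \<in> selected \<tau> g C U X U \<omega>. scop_miss \<alpha> \<mu> \<tau> g C U X Y j \<omega>} = {j\<in>sel (data \<omega>) U. miss (data \<omega>) j}"
      using selected_eq_sel_data[OF Un_upper2] scop_miss_iff_miss_data by (auto simp: sel_def)
    then show "real (card {j \<in> selected \<tau> g C U X U \<omega>. scop_miss \<alpha> \<mu> \<tau> g C U X Y j \<omega>}) /
        real (max (card (selected \<tau> g C U X U \<omega>)) 1) = (\<Sum>j\<in>U. miss_term fcr_weight j (data \<omega>))"
      unfolding sum_miss_term_fcr_weight selected_eq_sel_data[OF Un_upper2] by simp
  qed
  also have "\<dots> = (\<integral>x. (\<Sum>j\<in>U. miss_term fcr_weight j x) \<partial>law)"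
    by (intro integral_data borel_measurable_sum measurable_terms(2) fcr_weight(2))
  also have "\<dots> = (\<Sum>j\<in>U. \<integral>x. miss_term fcr_weight j x \<partial>law)"
    by (intro Bochner_Integration.integral_sum integrable_terms_fcr_weight)
  finally show ?thesis .
qed

lemma sum_integral_sel_term_fcr_weight:
  "(\<Sum>j\<in>U. \<integral>x. sel_term fcr_weight j x \<partial>law) = measure M {\<omega> \<in> space M. card (selected \<tau> g C U X U \<omega>) > 0}"
proof -
  have size: "(\<lambda>x. real (card (sel x U))) \<in> borel_measurable Samples"
    by (rule measurable_card_sel) simp
  have "Measurable.pred Samples (\<lambda>x. 0 < real (card (sel x U)))"
    unfolding pred_def by (rule borel_measurable_less[OF borel_measurable_const size])
  then have "measure M {\<omega> \<in> space M. card (sel (data \<omega>) U) > 0} = (\<integral>x. (if 0 < card (sel x U) then 1 else 0) \<partial>law)"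
    using measure_data[of "\<lambda>x. 0 < card (sel x U)"] by simp
  moreover have "(\<Sum>j\<in>U. \<integral>x. sel_term fcr_weight j x \<partial>law) = (\<integral>x. (\<Sum>j\<in>U. sel_term fcr_weight j x) \<partial>law)"
    by (intro Bochner_Integration.integral_sum[symmetric] integrable_terms_fcr_weight)
  ultimately show ?thesis by (simp add: sum_sel_term_fcr_weight selected_eq_sel_data[OF Un_upper2])
qed

lemma scop_FCR_le: "scop_FCR M \<alpha> \<mu> \<tau> g C U X Y \<le> \<alpha>"
proof -
  interpret prob_space M by (rule prob)
  have "scop_FCR M \<alpha> \<mu> \<tau> g C U X Y \<le> (\<Sum>j\<in>U. \<alpha> * (\<integral>x. sel_term fcr_weight j x \<partial>law))"
    unfolding scop_FCR_eq_sum_integral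
    by (rule sum_mono) (rule integral_miss_term_le[OF _ fcr_weight(2) fcr_weight(1)])
  also have "\<dots> = \<alpha> * measure M {\<omega> \<in> space M. card (selected \<tau> g C U X U \<omega>) > 0}"
    by (simp add: sum_distrib_left[symmetric] sum_integral_sel_term_fcr_weight)
  also have "\<dots> \<le> \<alpha>" using alpha by (simp add: mult_left_le)
  finally show ?thesis .
qed

lemma scop_FCR_ge:
  assumes inj: "AE \<omega> in M. inj_on (\<lambda>i. \<bar>Y i \<omega> - \<mu> (X i \<omega>)\<bar>) I"
    and nonempty: "prob_space.prob M {\<omega> \<in> space M. card (selected \<tau> g C U X U \<omega>) > 0} = 1"
  shows "\<alpha> - (\<integral>\<omega>. 1 / (real (card (selected \<tau> g C U X C \<omega>)) + 1) \<partial>M) \<le> scop_FCR M \<alpha> \<mu> \<tau> g C U X Y"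
proof -
  have size: "(\<lambda>x. 1 / (real (card (sel x C)) + 1)) \<in> borel_measurable Samples"
    using measurable_card_sel[of C] by measurable
  have "(\<Sum>j\<in>U. \<integral>x. slack_term fcr_weight j x \<partial>law) = (\<integral>x. (\<Sum>j\<in>U. slack_term fcr_weight j x) \<partial>law)"
    by (intro Bochner_Integration.integral_sum[symmetric] integrable_terms_fcr_weight)
  also have "\<dots> \<le> (\<integral>x. 1 / (real (card (sel x C)) + 1) \<partial>law)"
  proof (rule integral_mono)
    show "integrable law (\<lambda>x. 1 / (real (card (sel x C)) + 1))"
      by (rule integrable_law_bounded[OF size, of 1]) simp
  qed (use integrable_terms_fcr_weight(3) sum_slack_term_fcr_weight_le in auto)
  also have "\<dots> = (\<integral>\<omega>. 1 / (real (card (selected \<tau> g C U X C \<omega>)) + 1) \<partial>M)"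
    using integral_data[OF size] by (simp add: selected_eq_sel_data[OF Un_upper1])
  finally have slack: "(\<Sum>j\<in>U. \<integral>x. slack_term fcr_weight j x \<partial>law)
      \<le> (\<integral>\<omega>. 1 / (real (card (selected \<tau> g C U X C \<omega>)) + 1) \<partial>M)" .
  have "\<alpha> - (\<Sum>j\<in>U. \<integral>x. slack_term fcr_weight j x \<partial>law)
      = (\<Sum>j\<in>U. \<alpha> * (\<integral>x. sel_term fcr_weight j x \<partial>law) - (\<integral>x. slack_term fcr_weight j x \<partial>law))"
    using nonempty by (simp add: sum_subtractf sum_distrib_left[symmetric] sum_integral_sel_term_fcr_weight)
  also have "\<dots> \<le> scop_FCR M \<alpha> \<mu> \<tau> g C U X Y"
    unfolding scop_FCR_eq_sum_integral
    by (rule sum_mono) (rule integral_miss_term_ge[OF _ fcr_weight(2) fcr_weight(1) AE_law_inj_resid[OF inj]])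
  finally show ?thesis using slack by linarith
qed

end

theorem theorem1:
  fixes M :: "'w measure"
    and X :: "'i \<Rightarrow> 'w \<Rightarrow> real ^ 'd"
    and Y :: "'i \<Rightarrow> 'w \<Rightarrow> real"
    and \<mu> g :: "real ^ 'd \<Rightarrow> real"
    and \<tau> :: "('i \<Rightarrow> real) \<Rightarrow> real"
    and C U :: "'i set"
    and \<alpha> :: real
  assumes prob: "prob_space M"
    and finC: "finite C" and finU: "finite U" and disj: "C \<inter> U = {}"
    and alpha: "0 < \<alpha>" "\<alpha> < 1"
    and mu_meas: "\<mu> \<in> borel_measurable borel"
    and g_meas: "g \<in> borel_measurable borel"
    and X_meas: "\<And>i. i \<in> C \<union> U \<Longrightarrow> X i \<in> borel_measurable M"
    and Y_meas: "\<And>i. i \<in> C \<union> U \<Longrightarrow> Y i \<in> borel_measurable M"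
    and indep: "prob_space.indep_vars M (\<lambda>_. borel) (\<lambda>i \<omega>. (X i \<omega>, Y i \<omega>)) (C \<union> U)"
    and ident: "\<And>i k. i \<in> C \<union> U \<Longrightarrow> k \<in> C \<union> U \<Longrightarrow>
        distr M borel (\<lambda>\<omega>. (X i \<omega>, Y i \<omega>)) = distr M borel (\<lambda>\<omega>. (X k \<omega>, Y k \<omega>))"
    and tau_meas: "\<tau> \<in> borel_measurable (PiM (C \<union> U) (\<lambda>_. borel))"
    and tau_sym: "\<And>\<pi> f. \<pi> permutes (C \<union> U) \<Longrightarrow> f \<in> extensional (C \<union> U) \<Longrightarrow> \<tau> (f \<circ> \<pi>) = \<tau> f"
  shows "(\<forall>j \<in> U. prob_space.prob M {\<omega> \<in> space M. j \<in> selected \<tau> g C U X U \<omega>} > 0 \<longrightarrow>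
            cond_prob M (\<lambda>\<omega>. scop_miss \<alpha> \<mu> \<tau> g C U X Y j \<omega>)
                        (\<lambda>\<omega>. j \<in> selected \<tau> g C U X U \<omega>) \<le> \<alpha>)
       \<and> scop_FCR M \<alpha> \<mu> \<tau> g C U X Y \<le> \<alpha>
       \<and> (((AE \<omega> in M. inj_on (\<lambda>i. \<bar>Y i \<omega> - \<mu> (X i \<omega>)\<bar>) (C \<union> U))
            \<and> prob_space.prob M {\<omega> \<in> space M. card (selected \<tau> g C U X U \<omega>) > 0} = 1)
          \<longrightarrow> scop_FCR M \<alpha> \<mu> \<tau> g C U X Y
                \<ge> \<alpha> - (\<integral>\<omega>. 1 / (real (card (selected \<tau> g C U X C \<omega>)) + 1) \<partial>M))"
proof -
  interpret scop_setting M X Y \<mu> g \<tau> C U \<alpha>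
    by (rule scop_setting.intro) (fact assms)+
  show ?thesis
    using cond_prob_scop_miss_le scop_FCR_le scop_FCR_ge by auto
qed

end
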